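(* Let $n\ge2$ and let $\mathbb{F}$ be any field. Then $\mathrm{Der}_{\mathrm{inn}}(\mathbb{F}T_{4n})$ has dimension $3(n-1)$ over $\mathbb{F}$, and an $\mathbb{F}$-basis is $\{d_g\mid g\in\{a^i,\ a^{2i}b,\ a^{2i+1}b\mid 1\le i\le n-1\}\}$.
   Context: $T_{4n}=\langle a,b\mid a^{2n}=1,\ a^n=b^2,\ b^{-1}ab=a^{-1}\rangle$ is the dicyclic group of order $4n$; $\mathbb{F}T_{4n}$ is its group algebra. For $\beta\in\mathbb{F}T_{4n}$, the inner derivation $d_\beta$ is $d_\beta(\alpha)=\alpha\beta-\beta\alpha$; $\mathrm{Der}_{\mathrm{inn}}(\mathbb{F}T_{4n})=\{d_\beta\mid\beta\in\mathbb{F}T_{4n}\}$, an $\mathbb{F}$-vector space. *)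

theory Defs
  imports Complex_Main "HOL-Library.Function_Algebras"
begin

text \<open>Concrete model of the dicyclic group T_{4n}: the pair (i,e) with i < 2n, e < 2
  stands for the element a^i b^e.  Relations: a^{2n} = 1, b^2 = a^n, b a^j = a^{-j} b.\<close>

definition dic_carrier :: "nat \<Rightarrow> (nat \<times> nat) set" where
  "dic_carrier n = {(i, e). i < 2 * n \<and> e < 2}"

definition dic_mult :: "nat \<Rightarrow> nat \<times> nat \<Rightarrow> nat \<times> nat \<Rightarrow> nat \<times> nat" where
  "dic_mult n x y = (case x of (i, e) \<Rightarrow> case y of (j, f) \<Rightarrow>
     if e = 0 then ((i + j) mod (2 * n), f)
     else if f = 0 then ((i + 2 * n - j) mod (2 * n), 1)
     else ((i + 2 * n - j + n) mod (2 * n), 0))"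

definition dic_a :: "nat \<Rightarrow> nat \<Rightarrow> nat \<times> nat" where
  "dic_a n i = (i mod (2 * n), 0)"

definition dic_ab :: "nat \<Rightarrow> nat \<Rightarrow> nat \<times> nat" where
  "dic_ab n i = (i mod (2 * n), 1)"

definition group_alg :: "nat \<Rightarrow> ((nat \<times> nat) \<Rightarrow> 'a::field) set" where
  "group_alg n = {\<alpha>. \<forall>g. g \<notin> dic_carrier n \<longrightarrow> \<alpha> g = 0}"

definition alg_mult :: "nat \<Rightarrow> ((nat \<times> nat) \<Rightarrow> 'a::field) \<Rightarrow> ((nat \<times> nat) \<Rightarrow> 'a) \<Rightarrow> ((nat \<times> nat) \<Rightarrow> 'a)" where
  "alg_mult n \<alpha> \<beta> = (\<lambda>g. if g \<in> dic_carrier n then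
      (\<Sum>h\<in>dic_carrier n. \<Sum>k\<in>dic_carrier n. if dic_mult n h k = g then \<alpha> h * \<beta> k else 0)
    else 0)"

definition grp_elem :: "nat \<times> nat \<Rightarrow> ((nat \<times> nat) \<Rightarrow> 'a::field)" where
  "grp_elem g = (\<lambda>h. if h = g then 1 else 0)"

definition inner_der :: "nat \<Rightarrow> ((nat \<times> nat) \<Rightarrow> 'a::field) \<Rightarrow> ((nat \<times> nat) \<Rightarrow> 'a) \<Rightarrow> ((nat \<times> nat) \<Rightarrow> 'a)" where
  "inner_der n \<beta> = (\<lambda>\<alpha>. alg_mult n \<alpha> \<beta> - alg_mult n \<beta> \<alpha>)"

definition Der_inn :: "nat \<Rightarrow> (((nat \<times> nat) \<Rightarrow> 'a::field) \<Rightarrow> ((nat \<times> nat) \<Rightarrow> 'a)) set" where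
  "Der_inn n = {inner_der n \<beta> | \<beta>. \<beta> \<in> group_alg n}"

definition dscale :: "'a::field \<Rightarrow> (('b \<Rightarrow> 'a) \<Rightarrow> ('b \<Rightarrow> 'a)) \<Rightarrow> (('b \<Rightarrow> 'a) \<Rightarrow> ('b \<Rightarrow> 'a))" where
  "dscale c D = (\<lambda>\<alpha> g. c * D \<alpha> g)"

definition thm_basis :: "nat \<Rightarrow> (((nat \<times> nat) \<Rightarrow> 'a::field) \<Rightarrow> ((nat \<times> nat) \<Rightarrow> 'a)) set" where
  "thm_basis n = (\<lambda>g. inner_der n (grp_elem g)) `
     (\<Union>i\<in>{1..n-1}. {dic_a n i, dic_ab n (2*i), dic_ab n (2*i+1)})"

end

theory Submission
  imports Defs
begin

text \<open>
  Since \<open>\<beta> \<mapsto> d\<^sub>\<beta>\<close> is linear, \<open>d\<^sub>\<beta> = \<Sum>\<^sub>g \<beta>(g) d\<^sub>g\<close> and the inner derivations are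
  spanned by the \<open>d\<^sub>g\<close>, \<open>g \<in> T\<^sub>4\<^sub>n\<close>. A class sum is central in the group algebra, so the
  \<open>d\<^sub>g\<close> over any conjugacy class add up to zero. The classes of \<open>T\<^sub>4\<^sub>n\<close> are \<open>{1}\<close>,
  \<open>{a\<^sup>n}\<close>, \<open>{a\<^sup>j, a\<^sup>-\<^sup>j}\<close> and the two parity classes \<open>{a\<^sup>k b | k even}\<close>,
  \<open>{a\<^sup>k b | k odd}\<close>; hence the \<open>d\<^sub>g\<close> for the \<open>3(n - 1)\<close> elements \<open>a\<^sup>j\<close> \<open>(1 \<le> j < n)\<close>
  and \<open>a\<^sup>k b\<close> \<open>(2 \<le> k < 2n)\<close> already span. They are independent: since
  \<open>d\<^sub>g(h)(x) = [h g = x] - [g h = x]\<close>, evaluating at \<open>h\<close> and \<open>x = h g\<^sub>0\<close> gives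
  \<open>[g = g\<^sub>0] - [g = h g\<^sub>0 h\<inverse>]\<close>, and \<open>h\<close> can be chosen with \<open>h g\<^sub>0 h\<inverse>\<close> outside the list.
\<close>

lemma mod_less_triple:
  assumes "(a::nat) < 3 * m"
  shows "a mod m = (if a < m then a else if a < 2 * m then a - m else a - 2 * m)"
  using assms by (auto simp: le_mod_geq)

lemma diff_mod_eq_iff:
  assumes "i < m" "j < (m::nat)"
  shows "(m - i) mod m = j \<longleftrightarrow> i = (m - j) mod m"
  using assms by (cases "i = 0"; cases "j = 0") auto

lemma diff_mod_swap:
  assumes "k < m" "l < (m::nat)"
  shows "(l + m - k) mod m = (m - (k + m - l) mod m) mod m"
proof (cases "k \<le> l")
  case True
  then have "(l + m - k) mod m = l - k" using assms by (simp add: le_mod_geq)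
  moreover have "(k + m - l) mod m = (if k = l then 0 else k + m - l)" using True assms by auto
  ultimately show ?thesis using True assms by auto
next
  case False
  then have "(k + m - l) mod m = k - l" using assms by (simp add: le_mod_geq)
  moreover have "(l + m - k) mod m = l + m - k" using False assms by auto
  ultimately show ?thesis using False assms by auto
qed

lemma finite_dic_carrier: "finite (dic_carrier n)"
proof -
  have "dic_carrier n = {..<2*n} \<times> {..<2}" by (auto simp: dic_carrier_def)
  then show ?thesis by simp
qed

lemma dic_mult_closed:
  "g \<in> dic_carrier n \<Longrightarrow> h \<in> dic_carrier n \<Longrightarrow> dic_mult n g h \<in> dic_carrier n"
  by (auto simp: dic_carrier_def dic_mult_def split: prod.splits)

lemma dic_carrierE:
  assumes "g \<in> dic_carrier n"
  obtains j d where "g = (j, d)" "j < 2 * n" "d = 0 \<or> d = 1"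
  using assms by (cases g) (auto simp: dic_carrier_def less_2_cases_iff)

text \<open>\<open>dic_ldiv n h x\<close> is \<open>h\<inverse> x\<close> and \<open>dic_rdiv n h x\<close> is \<open>x h\<inverse>\<close>, in the coordinates of \<open>dic_mult\<close>.\<close>

definition dic_ldiv :: "nat \<Rightarrow> nat \<times> nat \<Rightarrow> nat \<times> nat \<Rightarrow> nat \<times> nat" where
  "dic_ldiv n h x = (case h of (k, e) \<Rightarrow> case x of (m, f) \<Rightarrow>
     if e = 0 then ((m + 2*n - k) mod (2*n), f)
     else if f = 1 then ((k + 2*n - m) mod (2*n), 0)
     else ((k + 3*n - m) mod (2*n), 1))"

definition dic_rdiv :: "nat \<Rightarrow> nat \<times> nat \<Rightarrow> nat \<times> nat \<Rightarrow> nat \<times> nat" where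
  "dic_rdiv n h x = (case h of (k, e) \<Rightarrow> case x of (m, f) \<Rightarrow>
     if e = 0 then (if f = 0 then ((m + 2*n - k) mod (2*n), 0) else ((m + k) mod (2*n), 1))
     else if f = 1 then ((m + 2*n - k) mod (2*n), 0)
     else ((m + k + n) mod (2*n), 1))"

lemma dic_mult_eq_iff_ldiv:
  assumes "h \<in> dic_carrier n" "g \<in> dic_carrier n" "x \<in> dic_carrier n"
  shows "dic_mult n h g = x \<longleftrightarrow> g = dic_ldiv n h x"
  using assms
  by (elim dic_carrierE disjE) (auto simp: dic_mult_def dic_ldiv_def mod_less_triple)

lemma dic_mult_eq_iff_rdiv:
  assumes "h \<in> dic_carrier n" "g \<in> dic_carrier n" "x \<in> dic_carrier n"
  shows "dic_mult n g h = x \<longleftrightarrow> g = dic_rdiv n h x"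
  using assms
  by (elim dic_carrierE disjE) (auto simp: dic_mult_def dic_rdiv_def mod_less_triple)

interpretation V: vector_space "dscale :: 'a::field \<Rightarrow> (('b \<Rightarrow> 'a) \<Rightarrow> ('b \<Rightarrow> 'a)) \<Rightarrow> _"
  by unfold_locales (auto simp: dscale_def fun_eq_iff algebra_simps)

lemma sum_apply: "sum f A x = (\<Sum>a\<in>A. f a x)"
  by (induction A rule: infinite_finite_induct) auto

lemma grp_elem_apply: "grp_elem g h = (if h = g then 1 else 0)"
  by (simp add: grp_elem_def)

lemma alg_mult_grp_elem_right:
  assumes "g \<in> dic_carrier n" "x \<in> dic_carrier n"
  shows "alg_mult n \<alpha> (grp_elem g) x = (\<Sum>h\<in>dic_carrier n. if dic_mult n h g = x then \<alpha> h else 0)"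
proof -
  have "(\<Sum>k\<in>dic_carrier n. if dic_mult n h k = x then \<alpha> h * grp_elem g k else 0)
      = (if dic_mult n h g = x then \<alpha> h else 0)" for h
  proof -
    have "(\<Sum>k\<in>dic_carrier n. if dic_mult n h k = x then \<alpha> h * grp_elem g k else 0)
      = (\<Sum>k\<in>dic_carrier n. if k = g then (if dic_mult n h g = x then \<alpha> h else 0) else 0)"
      by (rule sum.cong) (auto simp: grp_elem_apply)
    then show ?thesis using assms(1) finite_dic_carrier by simp
  qed
  then show ?thesis using assms(2) by (simp add: alg_mult_def)
qed

lemma alg_mult_grp_elem_left:
  assumes "g \<in> dic_carrier n" "x \<in> dic_carrier n"
  shows "alg_mult n (grp_elem g) \<alpha> x = (\<Sum>k\<in>dic_carrier n. if dic_mult n g k = x then \<alpha> k else 0)"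
proof -
  have "(\<Sum>h\<in>dic_carrier n. \<Sum>k\<in>dic_carrier n. if dic_mult n h k = x then grp_elem g h * \<alpha> k else 0)
      = (\<Sum>h\<in>dic_carrier n. if h = g then (\<Sum>k\<in>dic_carrier n. if dic_mult n g k = x then \<alpha> k else 0) else 0)"
    by (rule sum.cong) (auto simp: grp_elem_apply cong: if_cong intro!: sum.cong)
  then show ?thesis using assms finite_dic_carrier by (simp add: alg_mult_def)
qed

lemma alg_mult_expand_right:
  "alg_mult n \<alpha> \<beta> x = (\<Sum>g\<in>dic_carrier n. \<beta> g * alg_mult n \<alpha> (grp_elem g) x)"
proof (cases "x \<in> dic_carrier n")
  case True
  have "(\<Sum>g\<in>dic_carrier n. \<beta> g * alg_mult n \<alpha> (grp_elem g) x)
      = (\<Sum>g\<in>dic_carrier n. \<Sum>h\<in>dic_carrier n. if dic_mult n h g = x then \<alpha> h * \<beta> g else 0)"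
    using True by (auto simp: alg_mult_grp_elem_right sum_distrib_left intro!: sum.cong)
  also have "\<dots> = (\<Sum>h\<in>dic_carrier n. \<Sum>g\<in>dic_carrier n. if dic_mult n h g = x then \<alpha> h * \<beta> g else 0)"
    by (rule sum.swap)
  finally show ?thesis using True by (simp add: alg_mult_def)
qed (simp add: alg_mult_def)

lemma alg_mult_expand_left:
  "alg_mult n \<beta> \<alpha> x = (\<Sum>g\<in>dic_carrier n. \<beta> g * alg_mult n (grp_elem g) \<alpha> x)"
proof (cases "x \<in> dic_carrier n")
  case True
  have "(\<Sum>g\<in>dic_carrier n. \<beta> g * alg_mult n (grp_elem g) \<alpha> x)
      = (\<Sum>g\<in>dic_carrier n. \<Sum>h\<in>dic_carrier n. if dic_mult n g h = x then \<beta> g * \<alpha> h else 0)"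
    using True by (auto simp: alg_mult_grp_elem_left sum_distrib_left intro!: sum.cong)
  then show ?thesis using True by (simp add: alg_mult_def)
qed (simp add: alg_mult_def)

lemma inner_der_expand:
  "inner_der n \<beta> = (\<Sum>g\<in>dic_carrier n. dscale (\<beta> g) (inner_der n (grp_elem g)))"
  by (auto simp: fun_eq_iff sum_apply dscale_def inner_der_def alg_mult_expand_right[of n _ \<beta>]
      alg_mult_expand_left[of n \<beta>] right_diff_distrib sum_subtractf)

lemma inner_der_add:
  "inner_der n (\<beta> + \<gamma>) = inner_der n \<beta> + (inner_der n \<gamma> :: (nat \<times> nat \<Rightarrow> 'a::field) \<Rightarrow> _)"
  by (simp add: inner_der_expand[of n "\<beta> + \<gamma>"] inner_der_expand[of n \<beta>] inner_der_expand[of n \<gamma>]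
      V.scale_left_distrib sum.distrib)

lemma inner_der_scale:
  "inner_der n (\<lambda>g. c * \<beta> g) = dscale c (inner_der n \<beta> :: (nat \<times> nat \<Rightarrow> 'a::field) \<Rightarrow> _)"
  by (simp add: inner_der_expand[of n "\<lambda>g. c * \<beta> g"] inner_der_expand[of n \<beta>]
      V.scale_sum_right V.scale_scale)

lemma subspace_Der_inn: "V.subspace (Der_inn n :: ((nat \<times> nat \<Rightarrow> 'a::field) \<Rightarrow> _) set)"
  unfolding V.subspace_def
proof (intro conjI ballI allI)
  have "inner_der n (\<lambda>_. 0) = (0 :: (nat \<times> nat \<Rightarrow> 'a) \<Rightarrow> _)"
    by (simp add: inner_der_expand[of n "\<lambda>_. 0"])
  then show "0 \<in> (Der_inn n :: ((nat \<times> nat \<Rightarrow> 'a) \<Rightarrow> _) set)"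
    unfolding Der_inn_def by (force simp: group_alg_def)
next
  fix D E :: "(nat \<times> nat \<Rightarrow> 'a) \<Rightarrow> nat \<times> nat \<Rightarrow> 'a"
  assume "D \<in> Der_inn n" "E \<in> Der_inn n"
  then obtain \<beta> \<gamma> where "D = inner_der n \<beta>" "\<beta> \<in> group_alg n" "E = inner_der n \<gamma>" "\<gamma> \<in> group_alg n"
    unfolding Der_inn_def by blast
  then show "D + E \<in> Der_inn n" unfolding Der_inn_def
    by (auto simp: group_alg_def inner_der_add[symmetric] intro!: exI[of _ "\<beta> + \<gamma>"])
next
  fix c :: 'a and D :: "(nat \<times> nat \<Rightarrow> 'a) \<Rightarrow> nat \<times> nat \<Rightarrow> 'a"
  assume "D \<in> Der_inn n"
  then obtain \<beta> where "D = inner_der n \<beta>" "\<beta> \<in> group_alg n"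
    unfolding Der_inn_def by blast
  then show "dscale c D \<in> Der_inn n" unfolding Der_inn_def
    by (auto simp: group_alg_def inner_der_scale[symmetric] intro!: exI[of _ "\<lambda>g. c * \<beta> g"])
qed

lemma inner_der_grp_elem_apply:
  assumes "g \<in> dic_carrier n" "x \<in> dic_carrier n"
  shows "inner_der n (grp_elem g) \<alpha> x =
    (\<Sum>h\<in>dic_carrier n. if dic_mult n h g = x then \<alpha> h else 0)
    - (\<Sum>h\<in>dic_carrier n. if dic_mult n g h = x then \<alpha> h else 0)"
  using assms by (simp add: inner_der_def alg_mult_grp_elem_right alg_mult_grp_elem_left)

lemma inner_der_grp_elem_grp_elem:
  assumes "g \<in> dic_carrier n" "h \<in> dic_carrier n" "x \<in> dic_carrier n"
  shows "inner_der n (grp_elem g) (grp_elem h) x =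
    (if dic_mult n h g = x then 1 else 0) - (if dic_mult n g h = x then 1 else 0)"
proof -
  have collapse: "(\<Sum>k\<in>dic_carrier n. if P k then grp_elem h k else 0) = (if P h then 1 else 0)" for P
  proof -
    have "(\<Sum>k\<in>dic_carrier n. if P k then grp_elem h k else 0)
        = (\<Sum>k\<in>dic_carrier n. if k = h then (if P h then 1 else 0) else 0)"
      by (rule sum.cong) (auto simp: grp_elem_apply)
    then show ?thesis using assms(2) finite_dic_carrier by simp
  qed
  show ?thesis
    unfolding inner_der_grp_elem_apply[OF assms(1,3)] collapse[of "\<lambda>k. dic_mult n k g = x"]
      collapse[of "\<lambda>k. dic_mult n g k = x"] ..
qed

lemma sum_if_left_mult_eq:
  assumes "C \<subseteq> dic_carrier n" "h \<in> dic_carrier n" "x \<in> dic_carrier n"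
  shows "(\<Sum>g\<in>C. if dic_mult n h g = x then c else 0) = (if dic_ldiv n h x \<in> C then c else 0)"
proof -
  have "(\<Sum>g\<in>C. if dic_mult n h g = x then c else 0) = (\<Sum>g\<in>C. if g = dic_ldiv n h x then c else 0)"
    by (intro sum.cong refl) (simp add: dic_mult_eq_iff_ldiv[OF assms(2) subsetD[OF assms(1)] assms(3)])
  with finite_subset[OF assms(1) finite_dic_carrier] show ?thesis by simp
qed

lemma sum_if_right_mult_eq:
  assumes "C \<subseteq> dic_carrier n" "h \<in> dic_carrier n" "x \<in> dic_carrier n"
  shows "(\<Sum>g\<in>C. if dic_mult n g h = x then c else 0) = (if dic_rdiv n h x \<in> C then c else 0)"
proof -
  have "(\<Sum>g\<in>C. if dic_mult n g h = x then c else 0) = (\<Sum>g\<in>C. if g = dic_rdiv n h x then c else 0)"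
    by (intro sum.cong refl) (simp add: dic_mult_eq_iff_rdiv[OF assms(2) subsetD[OF assms(1)] assms(3)])
  with finite_subset[OF assms(1) finite_dic_carrier] show ?thesis by simp
qed

text \<open>Since \<open>x h\<inverse> = h (h\<inverse> x) h\<inverse>\<close>, this says that \<open>C\<close> is a union of conjugacy classes.\<close>

definition conj_closed :: "nat \<Rightarrow> (nat \<times> nat) set \<Rightarrow> bool" where
  "conj_closed n C \<longleftrightarrow> C \<subseteq> dic_carrier n \<and>
     (\<forall>h\<in>dic_carrier n. \<forall>x\<in>dic_carrier n. dic_ldiv n h x \<in> C \<longleftrightarrow> dic_rdiv n h x \<in> C)"

lemma inner_der_class_sum:
  assumes "conj_closed n C"
  shows "(\<Sum>g\<in>C. inner_der n (grp_elem g)) = (0 :: (nat \<times> nat \<Rightarrow> 'a::field) \<Rightarrow> _)"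
proof (intro ext)
  fix \<alpha> :: "nat \<times> nat \<Rightarrow> 'a" and x
  have C: "C \<subseteq> dic_carrier n" using assms by (simp add: conj_closed_def)
  show "(\<Sum>g\<in>C. inner_der n (grp_elem g)) \<alpha> x = (0 :: (nat \<times> nat \<Rightarrow> 'a) \<Rightarrow> _) \<alpha> x"
  proof (cases "x \<in> dic_carrier n")
    case False
    then show ?thesis by (simp add: sum_apply inner_der_def alg_mult_def)
  next
    case True
    have "(\<Sum>g\<in>C. inner_der n (grp_elem g)) \<alpha> x
        = (\<Sum>g\<in>C. (\<Sum>h\<in>dic_carrier n. if dic_mult n h g = x then \<alpha> h else 0)
                  - (\<Sum>h\<in>dic_carrier n. if dic_mult n g h = x then \<alpha> h else 0))"
      unfolding sum_apply using C True by (intro sum.cong refl) (auto simp: inner_der_grp_elem_apply)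
    also have "\<dots> = (\<Sum>g\<in>C. \<Sum>h\<in>dic_carrier n. if dic_mult n h g = x then \<alpha> h else 0)
          - (\<Sum>g\<in>C. \<Sum>h\<in>dic_carrier n. if dic_mult n g h = x then \<alpha> h else 0)"
      by (rule sum_subtractf)
    also have "\<dots> = (\<Sum>h\<in>dic_carrier n. if dic_ldiv n h x \<in> C then \<alpha> h else 0)
          - (\<Sum>h\<in>dic_carrier n. if dic_rdiv n h x \<in> C then \<alpha> h else 0)"
      using C True by (subst (1 2) sum.swap) (simp add: sum_if_left_mult_eq sum_if_right_mult_eq cong: sum.cong)
    also have "\<dots> = 0"
      using assms True by (simp add: conj_closed_def cong: sum.cong)
    finally show ?thesis by simp
  qed
qed

definition rotation_class :: "nat \<Rightarrow> nat \<Rightarrow> (nat \<times> nat) set" where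
  "rotation_class n j = {(j, 0), ((2 * n - j) mod (2 * n), 0)}"

definition reflection_class :: "nat \<Rightarrow> bool \<Rightarrow> (nat \<times> nat) set" where
  "reflection_class n e = {g. snd g = 1 \<and> fst g < 2 * n \<and> even (fst g) = e}"

lemma conj_closed_rotation_class:
  assumes "j < 2 * n"
  shows "conj_closed n (rotation_class n j)"
  unfolding conj_closed_def
proof (intro conjI ballI)
  show "rotation_class n j \<subseteq> dic_carrier n"
    using assms by (auto simp: rotation_class_def dic_carrier_def)
next
  fix h x assume "h \<in> dic_carrier n" "x \<in> dic_carrier n"
  obtain k e where h: "h = (k, e)" "k < 2 * n" "e = 0 \<or> e = 1"
    using \<open>h \<in> dic_carrier n\<close> by (rule dic_carrierE)
  obtain l f where x: "x = (l, f)" "l < 2 * n" "f = 0 \<or> f = 1"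
    using \<open>x \<in> dic_carrier n\<close> by (rule dic_carrierE)
  let ?neg = "\<lambda>i. (2 * n - i) mod (2 * n)"
  show "dic_ldiv n h x \<in> rotation_class n j \<longleftrightarrow> dic_rdiv n h x \<in> rotation_class n j"
  proof (cases "e = 1 \<and> f = 1")
    case True
    let ?A = "(k + 2 * n - l) mod (2 * n)"
    have "dic_ldiv n h x = (?A, 0)"
      using h x True by (simp add: dic_ldiv_def)
    moreover have "dic_rdiv n h x = (?neg ?A, 0)"
      using h x True diff_mod_swap[of k "2 * n" l] by (simp add: dic_rdiv_def)
    moreover have "?A < 2 * n" "?neg j < 2 * n" using assms by simp_all
    moreover from this have "?neg (?neg j) = j"
      using assms diff_mod_eq_iff[of "?neg j" "2 * n" j] by simp
    ultimately show ?thesis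
      using assms diff_mod_eq_iff[of ?A "2 * n" j] diff_mod_eq_iff[of ?A "2 * n" "?neg j"]
      by (simp add: rotation_class_def) blast
  next
    case False
    with h x show ?thesis by (auto simp: dic_ldiv_def dic_rdiv_def rotation_class_def)
  qed
qed

lemma conj_closed_reflection_class: "conj_closed n (reflection_class n e)"
  unfolding conj_closed_def
proof (intro conjI ballI)
  show "reflection_class n e \<subseteq> dic_carrier n"
    by (auto simp: reflection_class_def dic_carrier_def)
next
  fix h x assume "h \<in> dic_carrier n" "x \<in> dic_carrier n"
  then show "dic_ldiv n h x \<in> reflection_class n e \<longleftrightarrow> dic_rdiv n h x \<in> reflection_class n e"
    by (elim dic_carrierE disjE) (auto simp: reflection_class_def dic_ldiv_def dic_rdiv_def dvd_mod_iff)
qed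

definition basis_elems :: "nat \<Rightarrow> (nat \<times> nat) set" where
  "basis_elems n = {(j, 0) | j. 1 \<le> j \<and> j < n} \<union> {(j, 1) | j. 2 \<le> j \<and> j < 2 * n}"

lemma basis_elems_subset: "basis_elems n \<subseteq> dic_carrier n"
  by (auto simp: basis_elems_def dic_carrier_def)

lemma thm_basis_eq_image: "thm_basis n = (\<lambda>g. inner_der n (grp_elem g)) ` basis_elems n"
proof -
  have "(\<Union>i\<in>{1..n-1}. {dic_a n i, dic_ab n (2*i), dic_ab n (2*i+1)}) = basis_elems n"
  proof (intro equalityI subsetI)
    fix g assume "g \<in> (\<Union>i\<in>{1..n-1}. {dic_a n i, dic_ab n (2*i), dic_ab n (2*i+1)})"
    then show "g \<in> basis_elems n" by (auto simp: basis_elems_def dic_a_def dic_ab_def)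
  next
    fix g assume "g \<in> basis_elems n"
    then consider j where "g = (j, 0)" "1 \<le> j" "j < n" | j where "g = (j, 1)" "2 \<le> j" "j < 2 * n"
      by (auto simp: basis_elems_def)
    then show "g \<in> (\<Union>i\<in>{1..n-1}. {dic_a n i, dic_ab n (2*i), dic_ab n (2*i+1)})"
    proof cases
      case (1 j)
      then show ?thesis by (auto simp: dic_a_def intro!: bexI[of _ j])
    next
      case (2 j)
      then have "j = 2 * (j div 2) \<or> j = 2 * (j div 2) + 1" "1 \<le> j div 2" "j div 2 \<le> n - 1"
        by auto
      with 2 show ?thesis by (auto simp: dic_ab_def intro!: bexI[of _ "j div 2"])
    qed
  qed
  then show ?thesis by (simp add: thm_basis_def)
qed

lemma card_basis_elems: "card (basis_elems n) = 3 * (n - 1)"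
proof -
  have "basis_elems n = (\<lambda>j. (j, 0)) ` {1..<n} \<union> (\<lambda>j. (j, 1)) ` {2..<2*n}"
    by (auto simp: basis_elems_def)
  moreover have "card ((\<lambda>j. (j, 0::nat)) ` {1..<n}) = n - 1"
    by (simp add: card_image inj_on_def)
  moreover have "card ((\<lambda>j. (j, 1::nat)) ` {2..<2*n}) = 2*n - 2"
    by (simp add: card_image inj_on_def)
  moreover have "(\<lambda>j. (j, 0::nat)) ` {1..<n} \<inter> (\<lambda>j. (j, 1)) ` {2..<2*n} = {}"
    by auto
  ultimately show ?thesis by (simp add: card_Un_disjoint)
qed

lemma inner_der_basis_elem_in_span:
  "g \<in> basis_elems n \<Longrightarrow> inner_der n (grp_elem g) \<in> V.span (thm_basis n)"
  by (rule V.span_base) (simp add: thm_basis_eq_image)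

lemma inner_der_rotation_in_span:
  assumes "j < 2 * n"
  shows "inner_der n (grp_elem (j, 0) :: nat \<times> nat \<Rightarrow> 'a::field) \<in> V.span (thm_basis n)"
proof -
  let ?D = "\<lambda>g. inner_der n (grp_elem g :: nat \<times> nat \<Rightarrow> 'a)"
  have class_sum: "(\<Sum>g\<in>rotation_class n j. ?D g) = 0"
    by (rule inner_der_class_sum[OF conj_closed_rotation_class[OF assms]])
  consider "j = 0 \<or> j = n" | "1 \<le> j" "j < n" | "n < j" by linarith
  then show ?thesis
  proof cases
    case 1
    then have "rotation_class n j = {(j, 0)}" by (auto simp: rotation_class_def)
    with class_sum show ?thesis by (simp add: V.span_zero)
  next
    case 2
    then show ?thesis by (intro inner_der_basis_elem_in_span) (simp add: basis_elems_def)
  next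
    case 3
    then have "rotation_class n j = {(j, 0), (2 * n - j, 0)}" "(j, 0) \<noteq> (2 * n - j, 0)"
      using assms by (auto simp: rotation_class_def)
    with class_sum have "?D (j, 0) = - ?D (2 * n - j, 0)"
      by (simp add: eq_neg_iff_add_eq_0)
    moreover have "(2 * n - j, 0) \<in> basis_elems n"
      using 3 assms by (simp add: basis_elems_def) linarith
    ultimately show ?thesis by (simp add: V.span_neg inner_der_basis_elem_in_span)
  qed
qed

lemma inner_der_reflection_in_span:
  assumes "j < 2 * n"
  shows "inner_der n (grp_elem (j, 1) :: nat \<times> nat \<Rightarrow> 'a::field) \<in> V.span (thm_basis n)"
proof (cases "j < 2")
  case True
  let ?D = "\<lambda>g. inner_der n (grp_elem g :: nat \<times> nat \<Rightarrow> 'a)"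
  let ?C = "reflection_class n (even j)"
  have "?C \<subseteq> dic_carrier n" "(j, 1) \<in> ?C"
    using assms by (auto simp: reflection_class_def dic_carrier_def)
  then have "?D (j, 1) + (\<Sum>g\<in>?C - {(j, 1)}. ?D g) = (\<Sum>g\<in>?C. ?D g)"
    using finite_subset finite_dic_carrier by (metis sum.remove)
  also have "\<dots> = 0"
    by (rule inner_der_class_sum[OF conj_closed_reflection_class])
  finally have "?D (j, 1) = - (\<Sum>g\<in>?C - {(j, 1)}. ?D g)"
    by (simp add: eq_neg_iff_add_eq_0)
  moreover have "?C - {(j, 1)} \<subseteq> basis_elems n"
    using True by (auto simp: reflection_class_def basis_elems_def not_le less_2_cases_iff)
  ultimately show ?thesis
    by (auto intro!: V.span_neg V.span_sum inner_der_basis_elem_in_span)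
next
  case False
  with assms show ?thesis by (intro inner_der_basis_elem_in_span) (simp add: basis_elems_def)
qed

lemma Der_inn_subset_span:
  "(Der_inn n :: ((nat \<times> nat \<Rightarrow> 'a::field) \<Rightarrow> _) set) \<subseteq> V.span (thm_basis n)"
proof
  fix D :: "(nat \<times> nat \<Rightarrow> 'a) \<Rightarrow> _" assume "D \<in> Der_inn n"
  then obtain \<beta> where "D = inner_der n \<beta>" unfolding Der_inn_def by blast
  moreover have "inner_der n (grp_elem g) \<in> V.span (thm_basis n)" if "g \<in> dic_carrier n" for g
    using that inner_der_rotation_in_span inner_der_reflection_in_span by (elim dic_carrierE) auto
  ultimately show "D \<in> V.span (thm_basis n)"
    by (auto simp: inner_der_expand[of n \<beta>] intro!: V.span_sum V.span_scale)
qed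

lemma thm_basis_subset_Der_inn: "thm_basis n \<subseteq> Der_inn n"
proof -
  have "grp_elem g \<in> group_alg n" if "g \<in> basis_elems n" for g
    using that basis_elems_subset by (auto simp: group_alg_def grp_elem_def)
  then show ?thesis by (auto simp: thm_basis_eq_image Der_inn_def)
qed

text \<open>Conjugation by \<open>b\<close> inverts \<open>a\<^sup>j\<close>, and conjugation by \<open>a\<^sup>-\<^sup>i\<close> with \<open>i = j div 2\<close>
  sends \<open>a\<^sup>j b\<close> to \<open>b\<close> or \<open>a b\<close>.\<close>

lemma exists_conj_notin_basis_elems:
  assumes "g \<in> basis_elems n"
  obtains h where "h \<in> dic_carrier n" "dic_rdiv n h (dic_mult n h g) \<notin> basis_elems n"
proof -
  consider j where "g = (j, 0)" "1 \<le> j" "j < n" | j where "g = (j, 1)" "2 \<le> j" "j < 2 * n"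
    using assms by (auto simp: basis_elems_def)
  then show thesis
  proof cases
    case (1 j)
    then have "dic_mult n (0, 1) g = (2 * n - j, 1)"
      by (simp add: dic_mult_def mod_less_triple)
    moreover have "dic_rdiv n (0, 1) (2 * n - j, 1) = (2 * n - j, 0)"
      using 1 by (simp add: dic_rdiv_def mod_less_triple)
    ultimately show thesis
      using 1 by (intro that[of "(0, 1)"]) (auto simp: dic_carrier_def basis_elems_def)
  next
    case (2 j)
    define i where "i = j div 2"
    have i: "1 \<le> i" "i < n" "2 * i \<le> j" "j \<le> 2 * i + 1"
      using 2 unfolding i_def by auto
    have "dic_mult n (2 * n - i, 0) g = (j - i, 1)"
      using 2 i by (simp add: dic_mult_def mod_less_triple)
    moreover have "dic_rdiv n (2 * n - i, 0) (j - i, 1) = (j - 2 * i, 1)"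
      using 2 i by (simp add: dic_rdiv_def mod_less_triple)
    ultimately show thesis
      using i by (intro that[of "(2 * n - i, 0)"]) (auto simp: dic_carrier_def basis_elems_def)
  qed
qed

lemma inner_der_basis_elems_dual:
  assumes "g0 \<in> basis_elems n"
  obtains \<alpha> x where "\<And>g. g \<in> basis_elems n \<Longrightarrow>
    inner_der n (grp_elem g) \<alpha> x = (if g = g0 then 1 else (0 :: 'a::field))"
proof -
  obtain h where h: "h \<in> dic_carrier n" "dic_rdiv n h (dic_mult n h g0) \<notin> basis_elems n"
    using exists_conj_notin_basis_elems[OF assms] .
  let ?x = "dic_mult n h g0"
  have g0: "g0 \<in> dic_carrier n" using assms basis_elems_subset by blast
  have x: "?x \<in> dic_carrier n" using dic_mult_closed[OF h(1) g0] .
  have "inner_der n (grp_elem g) (grp_elem h) ?x = (if g = g0 then 1 else (0 :: 'a))"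
    if g: "g \<in> basis_elems n" for g
  proof -
    have gG: "g \<in> dic_carrier n" using g basis_elems_subset by blast
    have "dic_mult n h g = ?x \<longleftrightarrow> g = g0"
      using dic_mult_eq_iff_ldiv[OF h(1) gG x] dic_mult_eq_iff_ldiv[OF h(1) g0 x] by simp
    moreover have "dic_mult n g h \<noteq> ?x"
      using dic_mult_eq_iff_rdiv[OF h(1) gG x] h(2) g by auto
    ultimately show ?thesis by (simp add: inner_der_grp_elem_grp_elem[OF gG h(1) x])
  qed
  then show thesis by (rule that)
qed

lemma not_dependent_if_dual_evaluations:
  fixes B :: "(('b \<Rightarrow> 'a::field) \<Rightarrow> 'b \<Rightarrow> 'a) set"
  assumes dual: "\<And>v0. v0 \<in> B \<Longrightarrow> \<exists>\<alpha> x. \<forall>v\<in>B. v \<alpha> x = (if v = v0 then 1 else 0)"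
  shows "\<not> V.dependent B"
proof
  assume "V.dependent B"
  then obtain t u v0 where t: "finite t" "t \<subseteq> B" "(\<Sum>v\<in>t. dscale (u v) v) = 0"
    and v0: "v0 \<in> t" "u v0 \<noteq> 0"
    unfolding V.dependent_explicit by blast
  from v0(1) t(2) have "v0 \<in> B" by blast
  then obtain \<alpha> x where ev: "\<forall>v\<in>B. v \<alpha> x = (if v = v0 then 1 else 0)"
    using dual by blast
  have "0 = (\<Sum>v\<in>t. dscale (u v) v) \<alpha> x" by (simp only: t(3)) simp
  also have "\<dots> = (\<Sum>v\<in>t. u v * v \<alpha> x)" by (simp add: sum_apply dscale_def)
  also have "\<dots> = (\<Sum>v\<in>t. if v = v0 then u v else 0)"
  proof (rule sum.cong[OF refl])
    fix v assume "v \<in> t"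
    with t(2) ev have "v \<alpha> x = (if v = v0 then 1 else 0)" by blast
    then show "u v * v \<alpha> x = (if v = v0 then u v else 0)" by simp
  qed
  also have "\<dots> = u v0" using t(1) v0(1) by simp
  finally show False using v0(2) by simp
qed

lemma inj_on_inner_der_basis_elems:
  "inj_on (\<lambda>g. inner_der n (grp_elem g :: nat \<times> nat \<Rightarrow> 'a::field)) (basis_elems n)"
proof
  fix g g' assume g: "g \<in> basis_elems n" "g' \<in> basis_elems n"
    and eq: "inner_der n (grp_elem g :: nat \<times> nat \<Rightarrow> 'a) = inner_der n (grp_elem g')"
  obtain \<alpha> x where dual: "\<And>h. h \<in> basis_elems n \<Longrightarrow>
      inner_der n (grp_elem h) \<alpha> x = (if h = g then 1 else (0 :: 'a))"
    using inner_der_basis_elems_dual[OF g(1)] by blast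
  have "inner_der n (grp_elem g') \<alpha> x = 1"
    using dual[OF g(1)] eq by simp
  then show "g = g'"
    using dual[OF g(2)] by (simp split: if_splits)
qed

lemma thm_basis_independent: "\<not> V.dependent (thm_basis n :: ((nat \<times> nat \<Rightarrow> 'a::field) \<Rightarrow> _) set)"
proof (rule not_dependent_if_dual_evaluations)
  fix v0 :: "(nat \<times> nat \<Rightarrow> 'a) \<Rightarrow> _" assume "v0 \<in> thm_basis n"
  then obtain g0 where g0: "g0 \<in> basis_elems n" "v0 = inner_der n (grp_elem g0)"
    by (auto simp: thm_basis_eq_image)
  obtain \<alpha> x where dual: "\<And>g. g \<in> basis_elems n \<Longrightarrow>
      inner_der n (grp_elem g) \<alpha> x = (if g = g0 then 1 else (0 :: 'a))"
    using inner_der_basis_elems_dual[OF g0(1)] by blast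
  have ev: "v \<alpha> x = (if v = v0 then 1 else 0)" if "v \<in> thm_basis n" for v
  proof -
    obtain g where g: "g \<in> basis_elems n" "v = inner_der n (grp_elem g)"
      using \<open>v \<in> thm_basis n\<close> by (auto simp: thm_basis_eq_image)
    have "v = v0 \<longleftrightarrow> g = g0"
      using g g0 inj_on_eq_iff[OF inj_on_inner_der_basis_elems] by simp
    then show ?thesis using g dual by simp
  qed
  then show "\<exists>\<alpha> x. \<forall>v\<in>thm_basis n. v \<alpha> x = (if v = v0 then 1 else 0)"
    by (intro exI ballI)
qed

theorem theorem4p5:
  fixes n :: nat
  assumes "n \<ge> 2"
  shows "vector_space.dim dscale (Der_inn n :: (((nat \<times> nat) \<Rightarrow> 'a::field) \<Rightarrow> _) set) = 3 * (n - 1)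
    \<and> thm_basis n \<subseteq> (Der_inn n :: (((nat \<times> nat) \<Rightarrow> 'a::field) \<Rightarrow> _) set)
    \<and> \<not> module.dependent dscale (thm_basis n :: (((nat \<times> nat) \<Rightarrow> 'a::field) \<Rightarrow> _) set)
    \<and> module.span dscale (thm_basis n) = (Der_inn n :: (((nat \<times> nat) \<Rightarrow> 'a::field) \<Rightarrow> _) set)
    \<and> card (thm_basis n :: (((nat \<times> nat) \<Rightarrow> 'a::field) \<Rightarrow> _) set) = 3 * (n - 1)"
proof -
  have subset: "thm_basis n \<subseteq> (Der_inn n :: ((nat \<times> nat \<Rightarrow> 'a) \<Rightarrow> _) set)"
    by (rule thm_basis_subset_Der_inn)
  have indep: "\<not> V.dependent (thm_basis n :: ((nat \<times> nat \<Rightarrow> 'a) \<Rightarrow> _) set)"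
    by (rule thm_basis_independent)
  have span: "V.span (thm_basis n) = (Der_inn n :: ((nat \<times> nat \<Rightarrow> 'a) \<Rightarrow> _) set)"
    by (rule V.span_subspace[OF subset Der_inn_subset_span subspace_Der_inn])
  have card: "card (thm_basis n :: ((nat \<times> nat \<Rightarrow> 'a) \<Rightarrow> _) set) = 3 * (n - 1)"
    by (simp add: thm_basis_eq_image card_image[OF inj_on_inner_der_basis_elems] card_basis_elems)
  have "V.dim (Der_inn n :: ((nat \<times> nat \<Rightarrow> 'a) \<Rightarrow> _) set) = 3 * (n - 1)"
    using V.dim_span_eq_card_independent[OF indep] span card by simp
  with subset indep span card show ?thesis by simp
qed

end
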